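(* Let $f(\mathbf{x})=\mathbf{x}^{T}A\mathbf{x}+b^{T}\mathbf{x}+1$ with $A\in\mathbb{R}^{n\times n}$ symmetric and $b\in\mathbb{R}^n$, and suppose $f$ admits a monic Hermitian determinantal representation of size $2$ (equivalently, $Q/(1,1)=A-\frac14bb^T$ is negative semidefinite of rank at most $3$). Call two such representations $(A_1,\dots,A_n)$ and $(B_1,\dots,B_n)$ (Hermitian $2\times2$ matrices with $f(\mathbf{x})=\det(I_2+\sum_jx_jA_j)=\det(I_2+\sum_jx_jB_j)$) unitarily equivalent if there is a unitary $2\times 2$ matrix $U$ with $UA_jU^{*}=B_j$ for all $j$. Then: (i) if $\operatorname{rank}(Q/(1,1))=3$ (so $f$ has a Hermitian but no symmetric monic determinantal representation of size $2$), the monic Hermitian determinantal representations of size $2$ of $f$ form exactly two unitary equivalence classes; (ii) if $\operatorname{rank}(Q/(1,1))\le 2$, all monic Hermitian determinantal representations of size $2$ of $f$ are unitarily equivalent to one another. *)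

theory Defs
  imports "HOL-Analysis.Analysis"
begin

definition cadj :: "complex^2^2 \<Rightarrow> complex^2^2" where
  "cadj M = (\<chi> i k. cnj (M $ k $ i))"

definition hermitian2 :: "complex^2^2 \<Rightarrow> bool" where
  "hermitian2 M \<longleftrightarrow> cadj M = M"

definition unitary2 :: "complex^2^2 \<Rightarrow> bool" where
  "unitary2 U \<longleftrightarrow> U ** cadj U = mat 1 \<and> cadj U ** U = mat 1"

definition quad_f :: "real^'n^'n \<Rightarrow> real^'n \<Rightarrow> real^'n \<Rightarrow> real" where
  "quad_f A b x = x \<bullet> (A *v x) + b \<bullet> x + 1"

definition pencil2 :: "('n::finite \<Rightarrow> complex^2^2) \<Rightarrow> real^'n \<Rightarrow> complex^2^2" where
  "pencil2 P x = mat 1 + (\<Sum>j\<in>UNIV. (\<chi> i k. complex_of_real (x $ j) * P j $ i $ k))"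

definition mhdr2 :: "real^'n^'n \<Rightarrow> real^'n \<Rightarrow> ('n::finite \<Rightarrow> complex^2^2) set" where
  "mhdr2 A b = {P. (\<forall>j. hermitian2 (P j)) \<and>
      (\<forall>x. det (pencil2 P x) = complex_of_real (quad_f A b x))}"

definition unit_equiv2 :: "('n \<Rightarrow> complex^2^2) \<Rightarrow> ('n \<Rightarrow> complex^2^2) \<Rightarrow> bool" where
  "unit_equiv2 P Q \<longleftrightarrow> (\<exists>U. unitary2 U \<and> (\<forall>j. U ** P j ** cadj U = Q j))"

definition schur11 :: "real^'n^'n \<Rightarrow> real^'n \<Rightarrow> real^'n^'n" where
  "schur11 A b = A - (\<chi> i k. b $ i * b $ k / 4)"

end

theory Submission
  imports Defs "HOL-Analysis.Cross3"
begin

text \<open>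
  A Hermitian 2x2 matrix is \<open>a I + \<sigma>(v)\<close> with \<open>a\<close> real and \<open>\<sigma>(v) = v\<^sub>1 \<sigma>\<^sub>z + v\<^sub>2 \<sigma>\<^sub>x + v\<^sub>3 \<sigma>\<^sub>y\<close>,
  \<open>v \<in> \<real>\<^sup>3\<close>, and its determinant is \<open>a\<^sup>2 - |v|\<^sup>2\<close>. Expanding \<open>det (I + \<Sum>x\<^sub>j P\<^sub>j)\<close> therefore shows that
  \<open>P\<close> represents \<open>f\<close> iff the scalar parts of the \<open>P\<^sub>j\<close> are \<open>b\<^sub>j/2\<close> and their Pauli vectors \<open>v\<^sub>j\<close>
  have Gram matrix \<open>-Q/(1,1)\<close>; so \<open>rank Q/(1,1)\<close> is the rank of the family \<open>(v\<^sub>j)\<close>.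

  Conjugation by the unitary \<open>\<sigma>(m)/|m|\<close> acts on \<open>\<real>\<^sup>3\<close> as the half-turn about \<open>m\<close>, so all rotations
  are realised by unitary equivalences, and entrywise complex conjugation acts as the reflection
  \<open>v\<^sub>3 \<mapsto> -v\<^sub>3\<close>. Two families in \<open>\<real>\<^sup>3\<close> with the same Gram matrix differ by an orthogonal map,
  hence every representation is equivalent to a fixed \<open>P\<close> or to its entrywise conjugate.
  These two classes coincide iff the \<open>v\<^sub>j\<close> lie in a plane, i.e. iff \<open>rank Q/(1,1) \<le> 2\<close>: unitary
  equivalence preserves the triple products \<open>tr (\<sigma>(u) \<sigma>(v) \<sigma>(w)) = 2i u\<cdot>(v \<times> w)\<close>, which the
  reflection negates, while for coplanar \<open>v\<^sub>j\<close> the half-turn about their normal followed by the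
  half-turn about the third axis is that reflection.
\<close>

unbundle cross3_syntax

section \<open>Gram matrices and rank\<close>

lemma uminus_matrix_vector_mult: "(- M) *v x = - (M *v x)"
  for M :: "'a::ring_1^'n^'m"
  by (simp add: matrix_vector_mult_def vec_eq_iff sum_negf)

lemma rank_uminus: "rank (- A) = rank A"
  for A :: "real^'n^'m"
proof -
  have "(*v) (- A) = (*v) A \<circ> uminus"
    by (simp add: fun_eq_iff uminus_matrix_vector_mult linear_neg)
  moreover have "range uminus = (UNIV :: (real^'n) set)"
    by (metis surj_def minus_minus)
  ultimately show ?thesis
    by (metis rank_dim_range image_comp)
qed

lemma rank_transpose_mult_self:
  fixes A :: "real^'n^'m"
  shows "rank (transpose A ** A) = rank A"
proof -
  have range_eq: "range ((*v) (transpose A ** A)) = (*v) (transpose A) ` range ((*v) A)"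
    by (auto simp: matrix_vector_mul_assoc[symmetric] image_iff)
  have "inj_on ((*v) (transpose A)) (span (range ((*v) A)))"
  proof (rule inj_onI)
    fix y1 y2
    assume "y1 \<in> span (range ((*v) A))" "y2 \<in> span (range ((*v) A))"
      and eq: "transpose A *v y1 = transpose A *v y2"
    then obtain x1 x2 where y: "y1 = A *v x1" "y2 = A *v x2"
      by (auto simp: span_linear_image matrix_vector_mul_linear)
    have "(A *v (x1 - x2)) \<bullet> (A *v (x1 - x2)) = (x1 - x2) \<bullet> (transpose A *v (A *v (x1 - x2)))"
      by (metis dot_lmul_matrix inner_commute vector_transpose_matrix)
    also have "\<dots> = 0"
      using eq y by (simp add: matrix_vector_mult_diff_distrib)
    finally show "y1 = y2"
      using y by (simp add: matrix_vector_mult_diff_distrib)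
  qed
  then show ?thesis
    unfolding rank_dim_range range_eq by (rule dim_image_eq[OF matrix_vector_mul_linear])
qed

lemma rank_lt_rows_iff:
  fixes U :: "real^'n^'m"
  shows "rank U < CARD('m) \<longleftrightarrow> (\<exists>v. v \<noteq> 0 \<and> (\<forall>j. v \<bullet> column j U = 0))"
proof -
  have "(transpose U *v v) $ j = v \<bullet> column j U" for v j
    by (simp add: matrix_vector_mult_def transpose_def column_def inner_vec_def mult.commute)
  then have "transpose U *v v = 0 \<longleftrightarrow> (\<forall>j. v \<bullet> column j U = 0)" for v
    by (simp add: vec_eq_iff)
  moreover have "rank U < CARD('m) \<longleftrightarrow> rank (transpose U) \<noteq> CARD('m)"
    using rank_bound[of U] by (auto simp: rank_transpose)
  ultimately show ?thesis
    using matrix_nonfull_linear_equations_eq[of "transpose U"] by simp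
qed

lemma transpose_mult_self_nth: "(transpose U ** U) $ i $ k = column i U \<bullet> column k U"
  for U :: "real^'n^'m"
  by (simp add: matrix_matrix_mult_def transpose_def column_def inner_vec_def)

lemma symmetric_transpose_mult_self:
  fixes U :: "real^'n^'m"
  shows "transpose (transpose U ** U) = transpose U ** U"
  by (simp add: matrix_transpose_mul transpose_transpose)

lemma inner_transpose_mult_self:
  fixes U :: "real^'n^'m"
  shows "x \<bullet> ((transpose U ** U) *v x) = (U *v x) \<bullet> (U *v x)"
  by (metis dot_lmul_matrix inner_commute vector_transpose_matrix matrix_vector_mul_assoc)

lemma symmetric_matrix_eq_if_quadratic_form_eq:
  fixes M N :: "real^'n^'n"
  assumes "transpose M = M" "transpose N = N" "\<And>x. x \<bullet> (M *v x) = x \<bullet> (N *v x)"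
  shows "M = N"
proof -
  have entry: "axis i 1 \<bullet> (K *v axis k 1) = K $ i $ k" for K :: "real^'n^'n" and i k
    by (simp add: matrix_vector_mult_basis column_def inner_axis')
  have expand: "(a + c) \<bullet> (K *v (a + c)) = a \<bullet> (K *v a) + a \<bullet> (K *v c) + c \<bullet> (K *v a) + c \<bullet> (K *v c)"
    for K :: "real^'n^'n" and a c
    by (simp add: matrix_vector_right_distrib inner_add_left inner_add_right)
  have "M $ i $ k = N $ i $ k" for i k
  proof -
    have "M $ i $ i = N $ i $ i" "M $ k $ k = N $ k $ k"
      using assms(3)[of "axis i 1"] assms(3)[of "axis k 1"] by (simp_all add: entry)
    moreover have "M $ k $ i = M $ i $ k" "N $ k $ i = N $ i $ k"
      using assms(1,2) by (simp_all add: transpose_def vec_eq_iff)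
    moreover have "M $ i $ i + M $ i $ k + M $ k $ i + M $ k $ k = N $ i $ i + N $ i $ k + N $ k $ i + N $ k $ k"
      using assms(3)[of "axis i 1 + axis k 1"] unfolding expand entry .
    ultimately show ?thesis
      by simp
  qed
  then show ?thesis
    by (simp add: vec_eq_iff)
qed

section \<open>Unitary equivalence of families of complex 2x2 matrices\<close>

lemma mat2_eq_iff:
  "(M::'a^2^2) = N \<longleftrightarrow> M$1$1 = N$1$1 \<and> M$1$2 = N$1$2 \<and> M$2$1 = N$2$1 \<and> M$2$2 = N$2$2"
  by (simp add: vec_eq_iff forall_2)

lemma matrix_mult_2_nth: "((A::'a::semiring_1^2^2) ** B) $ i $ k = A$i$1 * B$1$k + A$i$2 * B$2$k"
  by (simp add: matrix_matrix_mult_def sum_2)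

lemma mat_2_nth [simp]:
  "(mat c :: 'a::zero^2^2) $1$1 = c" "(mat c :: 'a::zero^2^2) $1$2 = 0"
  "(mat c :: 'a::zero^2^2) $2$1 = 0" "(mat c :: 'a::zero^2^2) $2$2 = c"
  by (simp_all add: mat_def)

lemma cadj_nth [simp]: "cadj M $ i $ k = cnj (M $ k $ i)"
  by (simp add: cadj_def)

lemma cadj_cadj [simp]: "cadj (cadj M) = M"
  by (simp add: mat2_eq_iff)

lemma cadj_mat_1 [simp]: "cadj (mat 1) = mat 1"
  by (simp add: mat2_eq_iff)

lemma cadj_mult: "cadj (M ** N) = cadj N ** cadj M"
  by (simp add: mat2_eq_iff matrix_mult_2_nth mult.commute)

lemma cadj_scaleR: "cadj (r *\<^sub>R M) = r *\<^sub>R cadj M"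
  by (simp add: mat2_eq_iff)

definition cnj_mat :: "complex^2^2 \<Rightarrow> complex^2^2" where
  "cnj_mat M = (\<chi> i k. cnj (M $ i $ k))"

lemma cnj_mat_nth [simp]: "cnj_mat M $ i $ k = cnj (M $ i $ k)"
  by (simp add: cnj_mat_def)

lemma cnj_mat_mult: "cnj_mat (M ** N) = cnj_mat M ** cnj_mat N"
  by (simp add: mat2_eq_iff matrix_mult_2_nth)

lemma cnj_mat_cadj: "cnj_mat (cadj M) = cadj (cnj_mat M)"
  by (simp add: mat2_eq_iff)

lemma cnj_mat_mat_1 [simp]: "cnj_mat (mat 1) = mat 1"
  by (simp add: mat2_eq_iff)

lemma det_cnj_mat: "det (cnj_mat M) = cnj (det M)"
  by (simp add: det_2)

lemma unitary2_mat_1: "unitary2 (mat 1)"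
  by (simp add: unitary2_def)

lemma unitary2_cadj: "unitary2 U \<Longrightarrow> unitary2 (cadj U)"
  by (simp add: unitary2_def)

lemma unitary2_mult:
  assumes "unitary2 U" "unitary2 V"
  shows "unitary2 (U ** V)"
proof -
  have "U ** V ** cadj (U ** V) = U ** (V ** cadj V) ** cadj U"
    and "cadj (U ** V) ** (U ** V) = cadj V ** (cadj U ** U) ** V"
    by (simp_all add: cadj_mult matrix_mul_assoc)
  with assms show ?thesis
    by (simp add: unitary2_def)
qed

lemma unitary2_cnj_mat: "unitary2 U \<Longrightarrow> unitary2 (cnj_mat U)"
  unfolding unitary2_def by (metis cnj_mat_cadj cnj_mat_mult cnj_mat_mat_1)

lemma unit_equiv2_refl: "unit_equiv2 P P"
  unfolding unit_equiv2_def using unitary2_mat_1 by (intro exI[of _ "mat 1"]) simp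

lemma unit_equiv2_sym:
  assumes "unit_equiv2 P Q"
  shows "unit_equiv2 Q P"
proof -
  obtain U where U: "unitary2 U" "\<And>j. U ** P j ** cadj U = Q j"
    using assms unit_equiv2_def by blast
  have "cadj U ** Q j ** cadj (cadj U) = (cadj U ** U) ** P j ** (cadj U ** U)" for j
    by (simp add: U(2)[symmetric] matrix_mul_assoc)
  then have "cadj U ** Q j ** cadj (cadj U) = P j" for j
    using U(1) by (simp add: unitary2_def)
  then show ?thesis
    unfolding unit_equiv2_def using unitary2_cadj[OF U(1)] by blast
qed

lemma unit_equiv2_trans:
  assumes "unit_equiv2 P Q" "unit_equiv2 Q R"
  shows "unit_equiv2 P R"
proof -
  obtain U where U: "unitary2 U" "\<And>j. U ** P j ** cadj U = Q j"
    using assms unit_equiv2_def by blast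
  obtain V where V: "unitary2 V" "\<And>j. V ** Q j ** cadj V = R j"
    using assms unit_equiv2_def by blast
  have "(V ** U) ** P j ** cadj (V ** U) = R j" for j
    by (simp add: cadj_mult matrix_mul_assoc flip: V(2) U(2))
  then show ?thesis
    unfolding unit_equiv2_def using unitary2_mult[OF V(1) U(1)] by blast
qed

lemma equiv_unit_equiv2: "equiv M {(P, Q). P \<in> M \<and> Q \<in> M \<and> unit_equiv2 P Q}"
  by (auto intro!: equivI refl_onI symI transI intro: unit_equiv2_refl unit_equiv2_sym unit_equiv2_trans)

lemma unit_equiv2_cnj_mat:
  assumes "unit_equiv2 P Q"
  shows "unit_equiv2 (cnj_mat \<circ> P) (cnj_mat \<circ> Q)"
proof -
  obtain U where U: "unitary2 U" "\<And>j. U ** P j ** cadj U = Q j"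
    using assms unit_equiv2_def by blast
  have "cnj_mat U ** cnj_mat (P j) ** cadj (cnj_mat U) = cnj_mat (Q j)" for j
    by (simp add: flip: U(2) cnj_mat_cadj cnj_mat_mult)
  then show ?thesis
    unfolding unit_equiv2_def using unitary2_cnj_mat[OF U(1)] by auto
qed

lemma unitary2_sandwich_mat_add:
  assumes "unitary2 U"
  shows "U ** (mat c + S) ** cadj U = mat c + U ** S ** cadj U"
proof -
  have "U ** mat c = mat c ** U"
    by (simp add: mat2_eq_iff matrix_mult_2_nth mult.commute)
  then have "U ** mat c ** cadj U = mat c"
    using assms by (metis matrix_mul_assoc unitary2_def matrix_mul_rid)
  moreover have "(M + N) ** K = M ** K + N ** K" for M N K :: "complex^2^2"
    by (simp add: mat2_eq_iff matrix_mult_2_nth algebra_simps)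
  ultimately show ?thesis
    by (simp add: matrix_add_ldistrib)
qed

lemma unit_equiv2_mat_add_iff:
  "unit_equiv2 (\<lambda>j. mat (c j) + P j) (\<lambda>j. mat (c j) + Q j) \<longleftrightarrow> unit_equiv2 P Q"
  unfolding unit_equiv2_def by (metis (no_types, lifting) add_left_cancel unitary2_sandwich_mat_add)

section \<open>Pauli coordinates and rotations\<close>

\<comment> \<open>\<open>v$1 \<sigma>\<^sub>z + v$2 \<sigma>\<^sub>x + v$3 \<sigma>\<^sub>y\<close>: the traceless Hermitian matrices, identified with \<open>\<real>\<^sup>3\<close>\<close>
definition pauli :: "real^3 \<Rightarrow> complex^2^2" where
  "pauli v = (\<chi> i k. if i = 1 then (if k = 1 then complex_of_real (v$1) else Complex (v$2) (- v$3))
     else (if k = 1 then Complex (v$2) (v$3) else complex_of_real (- v$1)))"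

abbreviation pauli_equiv :: "('n \<Rightarrow> real^3) \<Rightarrow> ('n \<Rightarrow> real^3) \<Rightarrow> bool" where
  "pauli_equiv u w \<equiv> unit_equiv2 (pauli \<circ> u) (pauli \<circ> w)"

lemma pauli_nth [simp]:
  "pauli v $1$1 = complex_of_real (v$1)" "pauli v $1$2 = Complex (v$2) (- v$3)"
  "pauli v $2$1 = Complex (v$2) (v$3)" "pauli v $2$2 = complex_of_real (- v$1)"
  by (simp_all add: pauli_def)

lemma inner_vec_3: "(v::real^3) \<bullet> w = v$1 * w$1 + v$2 * w$2 + v$3 * w$3"
  by (simp add: inner_vec_def sum_3)

lemma scaleR_mat_nth [simp]: "((r::real) *\<^sub>R (M::complex^2^2)) $ i $ k = complex_of_real r * M $ i $ k"
  by (simp only: vector_scaleR_component) (simp add: scaleR_conv_of_real)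

lemma cadj_pauli [simp]: "cadj (pauli v) = pauli v"
  by (simp add: mat2_eq_iff complex_eq_iff)

lemma pauli_scaleR: "pauli (r *\<^sub>R v) = r *\<^sub>R pauli v"
  by (simp add: mat2_eq_iff complex_eq_iff)

lemma pauli_mult_self: "pauli v ** pauli v = (v \<bullet> v) *\<^sub>R mat 1"
  by (simp add: mat2_eq_iff matrix_mult_2_nth complex_eq_iff inner_vec_3 algebra_simps)

lemma pauli_sandwich: "pauli m ** pauli v ** pauli m = pauli ((2 * (m \<bullet> v)) *\<^sub>R m - (m \<bullet> m) *\<^sub>R v)"
  by (simp add: mat2_eq_iff matrix_mult_2_nth complex_eq_iff inner_vec_3 algebra_simps)

lemma det_mat_add_pauli: "det (mat (complex_of_real a) + pauli v) = complex_of_real (a\<^sup>2 - v \<bullet> v)"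
  by (simp add: det_2 complex_eq_iff inner_vec_3 power2_eq_square algebra_simps)

definition half_turn :: "real^3 \<Rightarrow> real^3 \<Rightarrow> real^3" where
  "half_turn m v = (2 * (m \<bullet> v) / (m \<bullet> m)) *\<^sub>R m - v"

lemma half_turn_inner:
  assumes "m \<noteq> 0"
  shows "half_turn m v \<bullet> half_turn m w = v \<bullet> w"
proof -
  have "m \<bullet> m \<noteq> 0"
    using assms by simp
  then show ?thesis
    unfolding half_turn_def
    by (simp add: inner_diff_left inner_diff_right inner_commute field_simps)
qed

lemma pauli_equiv_half_turn:
  assumes "m \<noteq> 0"
  shows "pauli_equiv u (half_turn m \<circ> u)"
proof -
  define U where "U = (1 / norm m) *\<^sub>R pauli m"
  have mm: "(1 / norm m) * (1 / norm m) * (m \<bullet> m) = 1"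
    using assms by (simp add: dot_square_norm power2_eq_square)
  have "U ** cadj U = ((1 / norm m) * (1 / norm m) * (m \<bullet> m)) *\<^sub>R mat 1"
    unfolding U_def cadj_scaleR cadj_pauli matrix_scalar_ac scalar_matrix_assoc[symmetric]
      pauli_mult_self by simp
  then have "unitary2 U"
    using mm by (simp add: unitary2_def U_def cadj_scaleR)
  moreover have "U ** pauli v ** cadj U = pauli (half_turn m v)" for v
  proof -
    have "U ** pauli v ** cadj U = ((1 / norm m) * (1 / norm m)) *\<^sub>R (pauli m ** pauli v ** pauli m)"
      unfolding U_def cadj_scaleR cadj_pauli matrix_scalar_ac scalar_matrix_assoc[symmetric] by simp
    also have "\<dots> = pauli (half_turn m v)"
      unfolding pauli_sandwich pauli_scaleR[symmetric] half_turn_def using assms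
      by (simp add: dot_square_norm power2_eq_square algebra_simps divide_simps)
    finally show ?thesis .
  qed
  ultimately show ?thesis
    unfolding unit_equiv2_def by auto
qed

definition phase_rot :: "complex \<Rightarrow> real^3 \<Rightarrow> real^3" where
  "phase_rot \<zeta> v = vector [v$1, Re (\<zeta> * Complex (v$2) (v$3)), Im (\<zeta> * Complex (v$2) (v$3))]"

lemma phase_rot_nth [simp]:
  "phase_rot \<zeta> v $ 1 = v $ 1" "phase_rot \<zeta> v $ 2 = Re (\<zeta> * Complex (v$2) (v$3))"
  "phase_rot \<zeta> v $ 3 = Im (\<zeta> * Complex (v$2) (v$3))"
  by (simp_all add: phase_rot_def)

lemma pauli_equiv_phase_rot:
  assumes "cmod \<zeta> = 1"
  shows "pauli_equiv u (phase_rot \<zeta> \<circ> u)"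
proof -
  define U :: "complex^2^2" where "U = (\<chi> i k. if i = k then (if i = 1 then 1 else \<zeta>) else 0)"
  have U_nth [simp]: "U$1$1 = 1" "U$1$2 = 0" "U$2$1 = 0" "U$2$2 = \<zeta>"
    by (simp_all add: U_def)
  have \<zeta>: "Re \<zeta> * Re \<zeta> + Im \<zeta> * Im \<zeta> = 1"
    using assms cmod_power2[of \<zeta>] by (simp add: power2_eq_square)
  then have "unitary2 U"
    by (simp add: unitary2_def mat2_eq_iff matrix_mult_2_nth complex_eq_iff)
  moreover have "U ** pauli v ** cadj U = pauli (phase_rot \<zeta> v)" for v
  proof -
    have \<zeta>': "Im \<zeta> * (Im \<zeta> * x) + Re \<zeta> * (Re \<zeta> * x) = x" for x
      by (metis \<zeta> distrib_right add.commute mult_1 mult.assoc)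
    show ?thesis
      using \<zeta> by (simp add: mat2_eq_iff matrix_mult_2_nth complex_eq_iff algebra_simps \<zeta>')
  qed
  ultimately show ?thesis
    unfolding unit_equiv2_def by auto
qed

definition flip3 :: "real^3 \<Rightarrow> real^3" where
  "flip3 v = vector [v$1, v$2, - v$3]"

lemma flip3_nth [simp]: "flip3 v $ 1 = v $ 1" "flip3 v $ 2 = v $ 2" "flip3 v $ 3 = - v $ 3"
  by (simp_all add: flip3_def)

lemma pauli_flip3: "pauli (flip3 v) = cnj_mat (pauli v)"
  by (simp add: mat2_eq_iff complex_eq_iff)

lemma pauli_equiv_flip3:
  "pauli_equiv u w \<Longrightarrow> pauli_equiv (flip3 \<circ> u) (flip3 \<circ> w)"
  using unit_equiv2_cnj_mat[of "pauli \<circ> u" "pauli \<circ> w"] by (simp add: comp_def pauli_flip3)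

definition trace2 :: "complex^2^2 \<Rightarrow> complex" where
  "trace2 M = M$1$1 + M$2$2"

lemma trace2_mult_commute: "trace2 (M ** N) = trace2 (N ** M)"
  by (simp add: trace2_def matrix_mult_2_nth algebra_simps)

lemma trace2_pauli_triple: "trace2 (pauli u ** pauli v ** pauli w) = Complex 0 (2 * (u \<bullet> (v \<times> w)))"
  by (simp add: trace2_def matrix_mult_2_nth complex_eq_iff inner_vec_3 cross_components algebra_simps)

lemma pauli_equiv_triple_product:
  assumes "pauli_equiv u w"
  shows "w i \<bullet> (w j \<times> w k) = u i \<bullet> (u j \<times> u k)"
proof -
  obtain U where U: "unitary2 U" "\<And>j. U ** pauli (u j) ** cadj U = pauli (w j)"
    using assms by (auto simp: unit_equiv2_def)
  have UU: "cadj U ** U = mat 1"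
    using U(1) unitary2_def by blast
  have "pauli (w i) ** pauli (w j) ** pauli (w k) = U ** (pauli (u i) ** pauli (u j) ** pauli (u k)) ** cadj U"
    unfolding U(2)[symmetric]
    by (simp add: matrix_mul_assoc) (simp add: matrix_mul_assoc[symmetric] UU)
  then have "trace2 (pauli (w i) ** pauli (w j) ** pauli (w k)) = trace2 (pauli (u i) ** pauli (u j) ** pauli (u k))"
    by (metis trace2_mult_commute matrix_mul_assoc UU matrix_mul_lid)
  then show ?thesis
    unfolding trace2_pauli_triple by simp
qed

lemma flip3_triple_product: "flip3 u \<bullet> (flip3 v \<times> flip3 w) = - (u \<bullet> (v \<times> w))"
  by (simp add: inner_vec_3 cross_components algebra_simps)

section \<open>Families of vectors with equal Gram matrices\<close>

lemma Re_mult_cnj_self: "Re (z * cnj z) = (cmod z)\<^sup>2"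
  by (metis Re_complex_of_real complex_norm_square)

lemma unimodular_factor:
  assumes "y * cnj b = z * cnj a" "cmod b = cmod a" "a \<noteq> 0"
  shows "y = (b / a) * z"
proof -
  have "y * (a * cnj a) = y * (b * cnj b)"
    using assms(2) by (simp only: complex_norm_square[symmetric])
  also have "\<dots> = b * z * cnj a"
    using assms(1) by (simp add: ac_simps)
  finally have "y * a = b * z"
    using assms(3) by (simp add: ac_simps)
  with assms(3) show ?thesis
    by (simp add: field_simps)
qed

lemma complex_family_real_gram_eq:
  fixes z y :: "'n \<Rightarrow> complex"
  assumes G: "\<And>j l. Re (y j * cnj (y l)) = Re (z j * cnj (z l))"
  shows "\<exists>\<zeta>. cmod \<zeta> = 1 \<and> ((\<forall>j. y j = \<zeta> * z j) \<or> (\<forall>j. y j = \<zeta> * cnj (z j)))"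
proof -
  have norm_eq: "cmod (y j) = cmod (z j)" for j
    using G[of j j] unfolding Re_mult_cnj_self by (simp add: power2_eq_iff_nonneg)
  show ?thesis
  proof (cases "\<forall>j. z j = 0")
    case True
    then show ?thesis
      using norm_eq by (intro exI[of _ 1]) simp
  next
    case False
    then obtain k where zk: "z k \<noteq> 0"
      by blast
    define v where "v j = z j * cnj (z k)" for j
    define w where "w j = y j * cnj (y k)" for j
    have Re_eq: "Re (w j) = Re (v j)" for j
      using G[of j k] by (simp add: v_def w_def)
    have "cmod (w j) = cmod (v j)" for j
      using norm_eq by (simp add: v_def w_def norm_mult)
    then have Im_sq: "(Im (w j))\<^sup>2 = (Im (v j))\<^sup>2" for j
      using Re_eq[of j] cmod_power2[of "w j"] cmod_power2[of "v j"] by simp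
    have "w j * cnj (w l) = (y j * cnj (y l)) * (y k * cnj (y k))"
      and "v j * cnj (v l) = (z j * cnj (z l)) * (z k * cnj (z k))" for j l
      by (simp_all add: v_def w_def ac_simps)
    then have Re_cross: "Re (w j * cnj (w l)) = Re (v j * cnj (v l))" for j l
      using G[of j l] norm_eq[of k] by (simp add: complex_norm_square[symmetric])
    \<comment> \<open>a sign change of \<open>Im (v j)\<close> and none of \<open>Im (v l)\<close>, both nonzero, would change \<open>Re (v j * cnj (v l))\<close>\<close>
    have "(\<forall>j. w j = v j) \<or> (\<forall>j. w j = cnj (v j))"
    proof (rule ccontr)
      assume "\<not> ?thesis"
      then obtain j l where "w j \<noteq> v j" "w l \<noteq> cnj (v l)"
        by blast
      then have "Im (w j) = - Im (v j)" "Im (v j) \<noteq> 0" "Im (w l) = Im (v l)" "Im (v l) \<noteq> 0"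
        using Re_eq Im_sq[of j] Im_sq[of l] by (auto simp: complex_eq_iff power2_eq_iff)
      then show False
        using Re_cross[of j l] Re_eq[of j] Re_eq[of l] by simp
    qed
    then show ?thesis
    proof
      assume "\<forall>j. w j = v j"
      then have "y j = (y k / z k) * z j" for j
        using unimodular_factor norm_eq[of k] zk by (auto simp: v_def w_def)
      moreover have "cmod (y k / z k) = 1"
        using norm_eq[of k] zk by (simp add: norm_divide)
      ultimately show ?thesis
        by blast
    next
      assume "\<forall>j. w j = cnj (v j)"
      then have "y j = (y k / cnj (z k)) * cnj (z j)" for j
        using unimodular_factor[of "y j" "y k" "cnj (z j)" "cnj (z k)"] norm_eq[of k] zk
        by (auto simp: v_def w_def)
      moreover have "cmod (y k / cnj (z k)) = 1"
        using norm_eq[of k] zk by (simp add: norm_divide)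
      ultimately show ?thesis
        by blast
    qed
  qed
qed

lemma half_turn_to_axis1:
  fixes v :: "real^3"
  assumes "v \<noteq> 0"
  shows "\<exists>m. m \<noteq> 0 \<and> half_turn m v = norm v *\<^sub>R axis 1 1"
proof (cases "v + norm v *\<^sub>R axis 1 1 = 0")
  case True
  then have v: "v = - (norm v *\<^sub>R axis 1 1)"
    by (simp add: add_eq_0_iff)
  have "half_turn (axis 2 1) v = norm v *\<^sub>R axis 1 1"
    by (subst v) (simp add: half_turn_def vec_eq_iff forall_3 inner_vec_3 axis_def)
  moreover have "axis 2 1 \<noteq> (0::real^3)"
    by (simp add: axis_eq_0_iff)
  ultimately show ?thesis
    by blast
next
  case False
  define m where "m = v + norm v *\<^sub>R axis 1 1"
  have "v \<bullet> axis 1 1 = v $ 1" "(axis 1 1 :: real^3) \<bullet> axis 1 1 = 1" "v \<bullet> v = (norm v)\<^sup>2"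
    by (simp_all add: inner_axis inner_axis_axis dot_square_norm)
  then have mm: "m \<bullet> m = 2 * (norm v * (norm v + v$1))" and mv: "m \<bullet> v = norm v * (norm v + v$1)"
    by (simp_all add: m_def inner_add_left inner_add_right inner_commute power2_eq_square algebra_simps)
  have "m \<noteq> 0"
    using False by (simp add: m_def)
  then have "m \<bullet> m \<noteq> 0"
    by simp
  then have "norm v * (norm v + v$1) \<noteq> 0"
    by (simp add: mm)
  then have "half_turn m v = norm v *\<^sub>R axis 1 1"
    unfolding half_turn_def mm mv by (simp add: m_def)
  with \<open>m \<noteq> 0\<close> show ?thesis
    by blast
qed

lemma pauli_equiv_of_gram_eq_axis1:
  fixes u w :: "'n \<Rightarrow> real^3"
  assumes G: "\<And>i k. w i \<bullet> w k = u i \<bullet> u k"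
    and axis: "u k = c *\<^sub>R axis 1 1" "w k = c *\<^sub>R axis 1 1" "c \<noteq> 0"
  shows "pauli_equiv u w \<or> pauli_equiv (flip3 \<circ> u) w"
proof -
  have first: "w j $ 1 = u j $ 1" for j
    using G[of j k] axis by (simp add: inner_vec_3 axis_def)
  define z where "z j = Complex (u j $ 2) (u j $ 3)" for j
  define y where "y j = Complex (w j $ 2) (w j $ 3)" for j
  have "Re (y j * cnj (y l)) = Re (z j * cnj (z l))" for j l
    using G[of j l] first[of j] first[of l] by (simp add: z_def y_def inner_vec_3)
  then obtain \<zeta> where \<zeta>: "cmod \<zeta> = 1" "(\<forall>j. y j = \<zeta> * z j) \<or> (\<forall>j. y j = \<zeta> * cnj (z j))"
    using complex_family_real_gram_eq[of y z] by blast
  from \<zeta>(2) have "w = phase_rot \<zeta> \<circ> u \<or> w = phase_rot \<zeta> \<circ> (flip3 \<circ> u)"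
    using first by (auto simp: fun_eq_iff vec_eq_iff forall_3 y_def z_def complex_eq_iff)
  then show ?thesis
    using pauli_equiv_phase_rot[OF \<zeta>(1)] by metis
qed

lemma pauli_equiv_of_gram_eq:
  fixes u w :: "'n \<Rightarrow> real^3"
  assumes G: "\<And>i k. w i \<bullet> w k = u i \<bullet> u k"
  shows "pauli_equiv u w \<or> pauli_equiv (flip3 \<circ> u) w"
proof (cases "\<forall>j. u j = 0")
  case True
  moreover have "w j = 0" for j
    using G[of j j] True by simp
  ultimately have "w = u"
    by (simp add: fun_eq_iff)
  then show ?thesis
    using unit_equiv2_refl by blast
next
  case False
  then obtain k where uk: "u k \<noteq> 0"
    by blast
  have norm_eq: "norm (w k) = norm (u k)"
    using G[of k k] by (simp add: norm_eq_sqrt_inner)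
  then have wk: "w k \<noteq> 0"
    using uk by auto
  obtain m where m: "m \<noteq> 0" "half_turn m (u k) = norm (u k) *\<^sub>R axis 1 1"
    using half_turn_to_axis1[OF uk] by blast
  obtain m' where m': "m' \<noteq> 0" "half_turn m' (w k) = norm (u k) *\<^sub>R axis 1 1"
    using half_turn_to_axis1[OF wk] norm_eq by auto
  have "pauli_equiv (half_turn m \<circ> u) (half_turn m' \<circ> w) \<or>
      pauli_equiv (flip3 \<circ> (half_turn m \<circ> u)) (half_turn m' \<circ> w)"
  proof (rule pauli_equiv_of_gram_eq_axis1[where k = k and c = "norm (u k)"])
    show "(half_turn m' \<circ> w) i \<bullet> (half_turn m' \<circ> w) j = (half_turn m \<circ> u) i \<bullet> (half_turn m \<circ> u) j" for i j
      using G by (simp add: half_turn_inner m(1) m'(1))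
    show "(half_turn m \<circ> u) k = norm (u k) *\<^sub>R axis 1 1" "(half_turn m' \<circ> w) k = norm (u k) *\<^sub>R axis 1 1"
      using m(2) m'(2) by simp_all
    show "norm (u k) \<noteq> 0"
      using uk by simp
  qed
  moreover have u_u': "pauli_equiv u (half_turn m \<circ> u)"
    and w'_w: "pauli_equiv (half_turn m' \<circ> w) w"
    using pauli_equiv_half_turn m(1) m'(1) unit_equiv2_sym by blast+
  moreover have "pauli_equiv (flip3 \<circ> u) (flip3 \<circ> (half_turn m \<circ> u))"
    using pauli_equiv_flip3[OF u_u'] .
  ultimately show ?thesis
    by (meson unit_equiv2_trans)
qed

lemma normal_exists_if_triple_products_zero:
  fixes u :: "'n \<Rightarrow> real^3"
  assumes "\<And>i j k. u i \<bullet> (u j \<times> u k) = 0"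
  shows "\<exists>n. n \<noteq> 0 \<and> (\<forall>j. n \<bullet> u j = 0)"
proof (cases "\<exists>a c. u a \<times> u c \<noteq> 0")
  case True
  then obtain a c where "u a \<times> u c \<noteq> 0"
    by blast
  moreover have "(u a \<times> u c) \<bullet> u j = 0" for j
    using assms[of j a c] by (simp add: inner_commute)
  ultimately show ?thesis
    by blast
next
  case all_parallel: False
  show ?thesis
  proof (cases "\<forall>j. u j = 0")
    case True
    then show ?thesis
      by (intro exI[of _ "axis 1 1"]) (simp add: axis_eq_0_iff)
  next
    case False
    then obtain a where a: "u a \<noteq> 0"
      by blast
    obtain e where e: "u a \<times> e \<noteq> 0"
      using cross_basis_nonzero[OF a] by blast
    have "(u a \<times> e) \<bullet> u j = e \<bullet> (u j \<times> u a)" for j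
      by (simp add: inner_vec_3 cross_components algebra_simps)
    then have "(u a \<times> e) \<bullet> u j = 0" for j
      using all_parallel cross_skew[of "u j" "u a"] by simp
    with e show ?thesis
      by blast
  qed
qed

lemma pauli_equiv_flip3_iff_coplanar:
  fixes u :: "'n \<Rightarrow> real^3"
  shows "pauli_equiv u (flip3 \<circ> u) \<longleftrightarrow> (\<exists>n. n \<noteq> 0 \<and> (\<forall>j. n \<bullet> u j = 0))"
proof
  assume "pauli_equiv u (flip3 \<circ> u)"
  then have "u i \<bullet> (u j \<times> u k) = - (u i \<bullet> (u j \<times> u k))" for i j k
    using pauli_equiv_triple_product[of u "flip3 \<circ> u" i j k] by (simp add: flip3_triple_product)
  then show "\<exists>n. n \<noteq> 0 \<and> (\<forall>j. n \<bullet> u j = 0)"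
    by (intro normal_exists_if_triple_products_zero) simp
next
  assume "\<exists>n. n \<noteq> 0 \<and> (\<forall>j. n \<bullet> u j = 0)"
  then obtain n where n: "n \<noteq> 0" "\<And>j. n \<bullet> u j = 0"
    by blast
  have e3: "axis 3 1 \<noteq> (0::real^3)"
    by (simp add: axis_eq_0_iff)
  have "half_turn n \<circ> u = uminus \<circ> u"
    using n by (simp add: fun_eq_iff half_turn_def)
  moreover have "half_turn (axis 3 1) \<circ> (uminus \<circ> u) = flip3 \<circ> u"
    by (simp add: fun_eq_iff half_turn_def vec_eq_iff forall_3 inner_vec_3 axis_def)
  ultimately have "pauli_equiv u (uminus \<circ> u)" "pauli_equiv (uminus \<circ> u) (flip3 \<circ> u)"
    using pauli_equiv_half_turn[OF n(1), of u] pauli_equiv_half_turn[OF e3, of "uminus \<circ> u"] by simp_all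
  then show "pauli_equiv u (flip3 \<circ> u)"
    by (rule unit_equiv2_trans)
qed

section \<open>Monic Hermitian determinantal representations of size 2\<close>

definition scalar_part :: "complex^2^2 \<Rightarrow> real" where
  "scalar_part M = Re (M$1$1 + M$2$2) / 2"

definition pauli_part :: "complex^2^2 \<Rightarrow> real^3" where
  "pauli_part M = vector [Re (M$1$1 - M$2$2) / 2, Re (M$2$1), Im (M$2$1)]"

lemma pauli_part_nth [simp]:
  "pauli_part M $ 1 = Re (M$1$1 - M$2$2) / 2" "pauli_part M $ 2 = Re (M$2$1)" "pauli_part M $ 3 = Im (M$2$1)"
  by (simp_all add: pauli_part_def)

lemma hermitian2_decomp:
  assumes "hermitian2 M"
  shows "M = mat (complex_of_real (scalar_part M)) + pauli (pauli_part M)"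
proof -
  have "cnj (M$1$1) = M$1$1" "cnj (M$2$2) = M$2$2" "cnj (M$2$1) = M$1$2"
    using assms by (simp_all add: hermitian2_def mat2_eq_iff)
  then have "Im (M$1$1) = 0" "Im (M$2$2) = 0" "Re (M$1$2) = Re (M$2$1)" "Im (M$1$2) = - Im (M$2$1)"
    by (simp_all add: complex_eq_iff)
  then show ?thesis
    by (simp add: mat2_eq_iff complex_eq_iff scalar_part_def field_simps)
qed

lemma hermitian2_cnj_mat: "hermitian2 M \<Longrightarrow> hermitian2 (cnj_mat M)"
  by (metis cnj_mat_cadj hermitian2_def)

lemma pauli_part_cnj_mat [simp]: "pauli_part (cnj_mat M) = flip3 (pauli_part M)"
  by (simp add: vec_eq_iff forall_3)

definition scalar_vec :: "('n::finite \<Rightarrow> complex^2^2) \<Rightarrow> real^'n" where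
  "scalar_vec P = (\<chi> j. scalar_part (P j))"

definition pauli_matrix :: "('n::finite \<Rightarrow> complex^2^2) \<Rightarrow> real^'n^3" where
  "pauli_matrix P = (\<chi> c j. pauli_part (P j) $ c)"

lemma column_pauli_matrix [simp]: "column j (pauli_matrix P) = pauli_part (P j)"
  by (simp add: column_def pauli_matrix_def vec_eq_iff)

lemma pencil2_hermitian:
  assumes "\<And>j. hermitian2 (P j)"
  shows "pencil2 P x = mat (complex_of_real (1 + scalar_vec P \<bullet> x)) + pauli (pauli_matrix P *v x)"
proof -
  have P: "P = (\<lambda>j. mat (complex_of_real (scalar_part (P j))) + pauli (pauli_part (P j)))"
    using hermitian2_decomp[OF assms] by simp
  show ?thesis
    by (subst (1) P)
      (simp add: pencil2_def mat2_eq_iff complex_eq_iff sum_component Re_sum Im_sum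
        scalar_vec_def pauli_matrix_def inner_vec_def matrix_vector_mult_def
        sum.distrib sum_subtractf sum_negf algebra_simps)
qed

lemma det_pencil2_hermitian:
  assumes "\<And>j. hermitian2 (P j)"
  shows "det (pencil2 P x) =
    complex_of_real ((1 + scalar_vec P \<bullet> x)\<^sup>2 - (pauli_matrix P *v x) \<bullet> (pauli_matrix P *v x))"
  unfolding pencil2_hermitian[OF assms] det_mat_add_pauli ..

lemma mhdr2_scalar_vec_pauli_norm:
  assumes "P \<in> mhdr2 A b"
  shows "scalar_vec P = (1/2) *\<^sub>R b"
    and "(pauli_matrix P *v x) \<bullet> (pauli_matrix P *v x) = (b \<bullet> x)\<^sup>2 / 4 - x \<bullet> (A *v x)"
proof -
  let ?a = "scalar_vec P" and ?U = "pauli_matrix P"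
  have herm: "\<And>j. hermitian2 (P j)"
    using assms by (simp add: mhdr2_def)
  have eq: "(1 + ?a \<bullet> y)\<^sup>2 - (?U *v y) \<bullet> (?U *v y) = y \<bullet> (A *v y) + b \<bullet> y + 1" for y
  proof -
    have "det (pencil2 P y) = complex_of_real (quad_f A b y)"
      using assms by (simp add: mhdr2_def)
    then show ?thesis
      unfolding det_pencil2_hermitian[OF herm] quad_f_def of_real_eq_iff .
  qed
  \<comment> \<open>comparing the identity at \<open>y\<close> and \<open>-y\<close> separates the odd and even parts of \<open>f\<close>\<close>
  have odd_part: "2 * (?a \<bullet> y) = b \<bullet> y" for y
    using eq[of y] eq[of "- y"] by (simp add: linear_neg power2_eq_square algebra_simps)
  have "?a \<bullet> axis j 1 = ((1/2) *\<^sub>R b) \<bullet> axis j 1" for j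
    using odd_part[of "axis j 1"] by simp
  then show "?a = (1/2) *\<^sub>R b"
    by (simp add: vec_eq_iff inner_axis)
  show "(?U *v x) \<bullet> (?U *v x) = (b \<bullet> x)\<^sup>2 / 4 - x \<bullet> (A *v x)"
    using eq[of x] odd_part[of x, symmetric] by (simp add: power2_eq_square algebra_simps)
qed

lemma mhdr2_cnj_mat:
  assumes "P \<in> mhdr2 A b"
  shows "cnj_mat \<circ> P \<in> mhdr2 A b"
proof -
  have "pencil2 (cnj_mat \<circ> P) x = cnj_mat (pencil2 P x)" for x
    by (simp add: mat2_eq_iff pencil2_def sum_component cnj_sum)
  then show ?thesis
    using assms by (simp add: mhdr2_def det_cnj_mat hermitian2_cnj_mat)
qed

lemma mhdr2_pauli_decomp:
  assumes "P \<in> mhdr2 A b"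
  shows "P = (\<lambda>j. mat (complex_of_real (b $ j / 2)) + pauli (pauli_part (P j)))"
proof
  fix j
  have "scalar_part (P j) = b $ j / 2"
    using arg_cong[OF mhdr2_scalar_vec_pauli_norm(1)[OF assms], of "\<lambda>v. v $ j"] by (simp add: scalar_vec_def)
  moreover have "hermitian2 (P j)"
    using assms by (simp add: mhdr2_def)
  ultimately show "P j = mat (complex_of_real (b $ j / 2)) + pauli (pauli_part (P j))"
    using hermitian2_decomp by metis
qed

lemma mhdr2_unit_equiv2_iff:
  assumes "P \<in> mhdr2 A b" "Q \<in> mhdr2 A b"
  shows "unit_equiv2 P Q \<longleftrightarrow> pauli_equiv (pauli_part \<circ> P) (pauli_part \<circ> Q)"
proof -
  have "unit_equiv2 P Q \<longleftrightarrow>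
      unit_equiv2 (\<lambda>j. mat (complex_of_real (b $ j / 2)) + pauli (pauli_part (P j)))
        (\<lambda>j. mat (complex_of_real (b $ j / 2)) + pauli (pauli_part (Q j)))"
    using mhdr2_pauli_decomp[OF assms(1)] mhdr2_pauli_decomp[OF assms(2)] by (rule arg_cong2)
  then show ?thesis
    unfolding unit_equiv2_mat_add_iff by (simp add: comp_def)
qed

lemma mhdr2_gram_eq:
  assumes "P \<in> mhdr2 A b" "Q \<in> mhdr2 A b"
  shows "transpose (pauli_matrix Q) ** pauli_matrix Q = transpose (pauli_matrix P) ** pauli_matrix P"
  by (rule symmetric_matrix_eq_if_quadratic_form_eq)
    (simp_all add: symmetric_transpose_mult_self inner_transpose_mult_self mhdr2_scalar_vec_pauli_norm(2)[OF assms(1)]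
      mhdr2_scalar_vec_pauli_norm(2)[OF assms(2)])

lemma schur11_eq_neg_gram:
  assumes "transpose A = A" "P \<in> mhdr2 A b"
  shows "schur11 A b = - (transpose (pauli_matrix P) ** pauli_matrix P)"
proof (rule symmetric_matrix_eq_if_quadratic_form_eq)
  show "transpose (schur11 A b) = schur11 A b"
    using assms(1) by (simp add: schur11_def transpose_def vec_eq_iff mult.commute)
  show "transpose (- (transpose (pauli_matrix P) ** pauli_matrix P)) = - (transpose (pauli_matrix P) ** pauli_matrix P)"
    by (simp add: transpose_def vec_eq_iff matrix_matrix_mult_def mult.commute)
  have bb: "x \<bullet> ((\<chi> i k. b $ i * b $ k / 4) *v x) = (b \<bullet> x)\<^sup>2 / 4" for x
    by (simp add: inner_vec_def matrix_vector_mult_def power2_eq_square sum_distrib_left sum_distrib_right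
        sum_divide_distrib mult_ac)
  show "x \<bullet> (schur11 A b *v x) = x \<bullet> (- (transpose (pauli_matrix P) ** pauli_matrix P) *v x)" for x
    unfolding schur11_def matrix_vector_mult_diff_rdistrib inner_diff_right bb uminus_matrix_vector_mult inner_minus_right
      inner_transpose_mult_self mhdr2_scalar_vec_pauli_norm(2)[OF assms(2)] by simp
qed

lemma mhdr2_equiv_or_equiv_cnj:
  assumes "P \<in> mhdr2 A b" "Q \<in> mhdr2 A b"
  shows "unit_equiv2 P Q \<or> unit_equiv2 (cnj_mat \<circ> P) Q"
proof -
  have "pauli_part (Q i) \<bullet> pauli_part (Q k) = pauli_part (P i) \<bullet> pauli_part (P k)" for i k
    using arg_cong[OF mhdr2_gram_eq[OF assms], of "\<lambda>M. M $ i $ k"] by (simp add: transpose_mult_self_nth)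
  then have "pauli_equiv (pauli_part \<circ> P) (pauli_part \<circ> Q) \<or> pauli_equiv (flip3 \<circ> (pauli_part \<circ> P)) (pauli_part \<circ> Q)"
    by (intro pauli_equiv_of_gram_eq) simp
  then show ?thesis
    using mhdr2_unit_equiv2_iff[OF assms] mhdr2_unit_equiv2_iff[OF mhdr2_cnj_mat[OF assms(1)] assms(2)]
    by (simp add: comp_def)
qed

lemma mhdr2_equiv_cnj_iff_rank_le_2:
  assumes "transpose A = A" "P \<in> mhdr2 A b"
  shows "unit_equiv2 P (cnj_mat \<circ> P) \<longleftrightarrow> rank (schur11 A b) \<le> 2"
proof -
  have "rank (schur11 A b) = rank (pauli_matrix P)"
    using schur11_eq_neg_gram[OF assms] by (simp add: rank_uminus rank_transpose_mult_self)
  then have "rank (schur11 A b) \<le> 2 \<longleftrightarrow> rank (pauli_matrix P) < CARD(3)"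
    by (simp; linarith)
  then show ?thesis
    using mhdr2_unit_equiv2_iff[OF assms(2) mhdr2_cnj_mat[OF assms(2)]] rank_lt_rows_iff[of "pauli_matrix P"]
      pauli_equiv_flip3_iff_coplanar[of "pauli_part \<circ> P"]
    by (simp add: comp_def)
qed

lemma card_quotient_eq_2:
  assumes R: "equiv M R" and "a \<in> M" "c \<in> M" "(a, c) \<notin> R"
    and cover: "\<And>x. x \<in> M \<Longrightarrow> (a, x) \<in> R \<or> (c, x) \<in> R"
  shows "card (M // R) = 2"
proof -
  have "M // R = {R `` {a}, R `` {c}}"
  proof
    show "M // R \<subseteq> {R `` {a}, R `` {c}}"
      using cover equiv_class_eq[OF R] by (auto simp: quotient_def)
    show "{R `` {a}, R `` {c}} \<subseteq> M // R"
      using assms by (auto simp: quotient_def)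
  qed
  moreover have "R `` {a} \<noteq> R `` {c}"
    using assms eq_equiv_class[OF _ R] by blast
  ultimately show ?thesis
    by simp
qed

theorem mainTheorem5:
  fixes A :: "real^'n^'n" and b :: "real^'n"
  assumes "transpose A = A"
    and "mhdr2 A b \<noteq> {}"
  shows "(rank (schur11 A b) = 3 \<longrightarrow>
           card (mhdr2 A b // {(P, Q). P \<in> mhdr2 A b \<and> Q \<in> mhdr2 A b \<and> unit_equiv2 P Q}) = 2)
       \<and> (rank (schur11 A b) \<le> 2 \<longrightarrow>
           (\<forall>P\<in>mhdr2 A b. \<forall>Q\<in>mhdr2 A b. unit_equiv2 P Q))"
proof -
  obtain P where P: "P \<in> mhdr2 A b"
    using assms(2) by blast
  note self_conj_iff = mhdr2_equiv_cnj_iff_rank_le_2[OF assms(1) P]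
  note two_classes = mhdr2_equiv_or_equiv_cnj[OF P]
  show ?thesis
  proof (intro conjI impI)
    assume "rank (schur11 A b) = 3"
    then show "card (mhdr2 A b // {(P, Q). P \<in> mhdr2 A b \<and> Q \<in> mhdr2 A b \<and> unit_equiv2 P Q}) = 2"
      using self_conj_iff two_classes P mhdr2_cnj_mat[OF P]
      by (intro card_quotient_eq_2[OF equiv_unit_equiv2, where a = P and c = "cnj_mat \<circ> P"]) auto
  next
    assume "rank (schur11 A b) \<le> 2"
    then have "unit_equiv2 P Q" if "Q \<in> mhdr2 A b" for Q
      using self_conj_iff two_classes[OF that] unit_equiv2_trans by blast
    then show "\<forall>P\<in>mhdr2 A b. \<forall>Q\<in>mhdr2 A b. unit_equiv2 P Q"
      using unit_equiv2_sym unit_equiv2_trans by blast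
  qed
qed

end
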